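(* Let $A_{-1},A_0,A_1$ be nonnegative square matrices of finite dimension such that the block tridiagonal matrix $Q$ (with $A_0$ on the diagonal, $A_1$ on the superdiagonal, $A_{-1}$ on the subdiagonal, on the half-line) is irreducible and $\inf_{\theta\in\mathbb{R}}\mathrm{spr}(A_*(e^\theta))\le1$, where $A_*(z)=z^{-1}A_{-1}+A_0+zA_1$. Let $\underline\theta\le\bar\theta$ be the two real solutions of $\mathrm{spr}(A_*(e^\theta))=1$. Let $G$ be the minimal nonnegative solution of $G=A_{-1}+A_0G+A_1G^2$ and $G^r$ the minimal nonnegative solution of $G^r=A_1+A_0G^r+A_{-1}(G^r)^2$. Let $\boldsymbol{v}$ be a (nonnegative) right eigenvector of $G$ for the eigenvalue $e^{\underline\theta}$ and $\boldsymbol{v}^r$ a (nonnegative) right eigenvector of $G^r$ for the eigenvalue $e^{-\bar\theta}$. If $\underline\theta=\bar\theta$, then $\boldsymbol{v}=\boldsymbol{v}^r$ up to multiplication by a positive constant.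
   Context: It is known in this setting that $\mathrm{spr}(G)=e^{\underline\theta}$, $\mathrm{spr}(G^r)=e^{-\bar\theta}$, and $I-A_*(z)=(I-zR)(I-H)(I-z^{-1}G)$ with $R$ the minimal nonnegative solution of $R=R^2A_{-1}+RA_0+A_1$ and $H=A_0+A_1G$; also $A_*(e^{\theta})$ is irreducible. *)

theory Defs
  imports "HOL-Analysis.Analysis"
begin

definition nonneg_mat :: "real^'n^'m \<Rightarrow> bool" where
  "nonneg_mat A \<longleftrightarrow> (\<forall>i j. A $ i $ j \<ge> 0)"

definition nonneg_vec :: "real^'n \<Rightarrow> bool" where
  "nonneg_vec v \<longleftrightarrow> (\<forall>i. v $ i \<ge> 0)"

definition is_ceigenvalue :: "real^'n^'n \<Rightarrow> complex \<Rightarrow> bool" where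
  "is_ceigenvalue A l \<longleftrightarrow>
     (\<exists>v::complex^'n. v \<noteq> 0 \<and> (\<chi> i j. complex_of_real (A $ i $ j)) *v v = l *s v)"

definition spr :: "real^'n^'n \<Rightarrow> real" where
  "spr A = Max {cmod l | l. is_ceigenvalue A l}"

definition Astar :: "real^'n^'n \<Rightarrow> real^'n^'n \<Rightarrow> real^'n^'n \<Rightarrow> real \<Rightarrow> real^'n^'n" where
  "Astar Am A0 A1 z = (inverse z) *\<^sub>R Am + A0 + z *\<^sub>R A1"

text \<open>Block tridiagonal matrix Q on the half-line, states (level, phase).\<close>
definition Qmat :: "real^'n^'n \<Rightarrow> real^'n^'n \<Rightarrow> real^'n^'n \<Rightarrow> (nat \<times> 'n) \<Rightarrow> (nat \<times> 'n) \<Rightarrow> real" where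
  "Qmat Am A0 A1 x y =
     (let (k, i) = x; (l, j) = y in
       if l = k then A0 $ i $ j
       else if l = Suc k then A1 $ i $ j
       else if k = Suc l then Am $ i $ j
       else 0)"

definition irreducible_inf :: "('s \<Rightarrow> 's \<Rightarrow> real) \<Rightarrow> bool" where
  "irreducible_inf M \<longleftrightarrow> (\<forall>x y. (x, y) \<in> {(a, b). M a b > 0}\<^sup>+)"

definition minimal_nonneg_solution :: "(real^'n^'n \<Rightarrow> real^'n^'n) \<Rightarrow> real^'n^'n \<Rightarrow> bool" where
  "minimal_nonneg_solution F X \<longleftrightarrow>
     nonneg_mat X \<and> X = F X \<and>
     (\<forall>Y. nonneg_mat Y \<and> Y = F Y \<longrightarrow> (\<forall>i j. X $ i $ j \<le> Y $ i $ j))"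

end

theory Submission
  imports Defs
begin

text \<open>When \<open>\<underline>\<theta> = \<bar>\<theta> = \<theta>\<close> and \<open>z = e\<^sup>\<theta>\<close>, the equation \<open>G = A\<^sub>-\<^sub>1 + A\<^sub>0 G + A\<^sub>1 G\<^sup>2\<close>
  applied to \<open>G v = z v\<close> gives \<open>A\<^sub>*(z) v = v\<close>, and symmetrically \<open>G\<^sup>r v\<^sup>r = z\<^sup>-\<^sup>1 v\<^sup>r\<close> gives
  \<open>A\<^sub>*(z) v\<^sup>r = v\<^sup>r\<close>. Irreducibility of \<open>Q\<close> projects onto the phases, so \<open>A\<^sub>*(z)\<close> is a nonnegative
  irreducible matrix, whose nonnegative eigenvectors for a given eigenvalue are unique up to
  scaling: subtracting the largest multiple of one that stays below the other leaves a
  nonnegative eigenvector with a zero entry, and zeros propagate along the positive entries.\<close>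

lemma trancl_map:
  assumes "\<And>a b. (a, b) \<in> r \<Longrightarrow> (f a, f b) \<in> s" and "(x, y) \<in> r\<^sup>+"
  shows "(f x, f y) \<in> s\<^sup>+"
  using assms(2)
proof (induction rule: trancl_induct)
  case (base y)
  then show ?case using assms(1) by blast
next
  case (step y w)
  then show ?case using assms(1) by (blast intro: trancl_into_trancl)
qed

lemma nonneg_eigenvector_zero_trancl:
  fixes M :: "real^'n^'n" and u :: "real^'n"
  assumes M: "nonneg_mat M" and u: "nonneg_vec u" and eig: "M *v u = r *\<^sub>R u"
    and ui: "u $ i = 0" and path: "(i, j) \<in> {(a, b). M $ a $ b > 0}\<^sup>+"
  shows "u $ j = 0"
proof -
  have zero_step: "u $ b = 0" if "u $ a = 0" "M $ a $ b > 0" for a b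
  proof -
    have "(\<Sum>k\<in>UNIV. M $ a $ k * u $ k) = (M *v u) $ a"
      by (simp add: matrix_vector_mult_def)
    also have "\<dots> = 0" using eig that(1) by simp
    finally have "(\<Sum>k\<in>UNIV. M $ a $ k * u $ k) = 0" .
    moreover have "\<forall>k\<in>UNIV. M $ a $ k * u $ k \<ge> 0"
      using M u by (auto simp: nonneg_mat_def nonneg_vec_def)
    ultimately have "M $ a $ b * u $ b = 0"
      using sum_nonneg_eq_0_iff[of UNIV "\<lambda>k. M $ a $ k * u $ k"] by simp
    with that(2) show ?thesis by simp
  qed
  from path show ?thesis
    by (induction rule: trancl_induct) (use ui zero_step in auto)
qed

lemma irreducible_nonneg_eigenvector_pos:
  fixes M :: "real^'n^'n" and u :: "real^'n"
  assumes M: "nonneg_mat M" and irr: "irreducible_inf (\<lambda>a b. M $ a $ b)"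
    and u: "nonneg_vec u" "u \<noteq> 0" and eig: "M *v u = r *\<^sub>R u"
  shows "u $ i > 0"
proof (rule ccontr)
  assume "\<not> u $ i > 0"
  then have "u $ i = 0" using u(1) by (metis nonneg_vec_def order_less_le)
  then have "u $ j = 0" for j
    using nonneg_eigenvector_zero_trancl[OF M u(1) eig] irr
    unfolding irreducible_inf_def by blast
  then have "u = 0" by (simp add: vec_eq_iff)
  with u(2) show False ..
qed

lemma irreducible_nonneg_eigenvector_unique:
  fixes M :: "real^'n^'n" and v w :: "real^'n"
  assumes M: "nonneg_mat M" and irr: "irreducible_inf (\<lambda>a b. M $ a $ b)"
    and v: "nonneg_vec v" "v \<noteq> 0" "M *v v = r *\<^sub>R v"
    and w: "nonneg_vec w" "w \<noteq> 0" "M *v w = r *\<^sub>R w"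
  shows "\<exists>c>0. v = c *\<^sub>R w"
proof -
  have w_pos: "w $ i > 0" for i
    using irreducible_nonneg_eigenvector_pos[OF M irr w] .
  define f where "f i = v $ i / w $ i" for i
  obtain i0 where i0: "\<And>i. f i0 \<le> f i"
    using ex_min_if_finite[of "range f"] by (auto simp: not_less)
  define c where "c = f i0"
  define u where "u = v - c *\<^sub>R w"
  have u_nonneg: "nonneg_vec u"
    unfolding nonneg_vec_def u_def
    using i0 w_pos by (simp add: c_def f_def pos_le_divide_eq)
  have u_eig: "M *v u = r *\<^sub>R u"
    unfolding u_def using v(3) w(3)
    by (simp add: matrix_vector_mult_diff_distrib matrix_vector_mult_scaleR algebra_simps)
  have "u $ i0 = 0"
    unfolding u_def c_def f_def using w_pos[of i0] by simp
  then have "u = 0"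
    using irreducible_nonneg_eigenvector_pos[OF M irr u_nonneg _ u_eig, of i0] by force
  then have v_eq: "v = c *\<^sub>R w" unfolding u_def by simp
  have "c \<ge> 0"
    using v(1) w_pos[of i0] by (simp add: c_def f_def nonneg_vec_def)
  moreover have "c \<noteq> 0" using v(2) v_eq by auto
  ultimately have "c > 0" by simp
  with v_eq show ?thesis by blast
qed

lemma Astar_swap: "Astar A1 A0 Am (inverse z) = Astar Am A0 A1 z"
  by (simp add: Astar_def algebra_simps)

lemma Astar_nonneg:
  assumes "nonneg_mat Am" "nonneg_mat A0" "nonneg_mat A1" "z > 0"
  shows "nonneg_mat (Astar Am A0 A1 z)"
  using assms unfolding Astar_def nonneg_mat_def by (auto intro!: add_nonneg_nonneg)

lemma Astar_irreducible:
  assumes nonneg: "nonneg_mat Am" "nonneg_mat A0" "nonneg_mat A1" and "z > 0"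
    and irr: "irreducible_inf (Qmat Am A0 A1)"
  shows "irreducible_inf (\<lambda>i j. Astar Am A0 A1 z $ i $ j)"
proof -
  have Astar_pos: "Astar Am A0 A1 z $ snd x $ snd y > 0" if "Qmat Am A0 A1 x y > 0" for x y
  proof -
    have "Am $ snd x $ snd y > 0 \<or> A0 $ snd x $ snd y > 0 \<or> A1 $ snd x $ snd y > 0"
      using that unfolding Qmat_def by (auto split: prod.splits if_splits)
    moreover have "Am $ snd x $ snd y \<ge> 0" "A0 $ snd x $ snd y \<ge> 0" "A1 $ snd x $ snd y \<ge> 0"
      using nonneg unfolding nonneg_mat_def by auto
    ultimately show ?thesis
      using \<open>z > 0\<close> unfolding Astar_def
      by (auto simp: add_pos_nonneg add_nonneg_pos)
  qed
  show ?thesis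
    unfolding irreducible_inf_def
  proof (intro allI)
    fix i j
    have "((0::nat, i), (0, j)) \<in> {(a, b). Qmat Am A0 A1 a b > 0}\<^sup>+"
      using irr unfolding irreducible_inf_def by blast
    from trancl_map[of _ snd, OF _ this] Astar_pos
    show "(i, j) \<in> {(a, b). Astar Am A0 A1 z $ a $ b > 0}\<^sup>+" by fastforce
  qed
qed

lemma quadratic_root_eigenvector_Astar:
  fixes Am A0 A1 X :: "real^'n^'n" and v :: "real^'n"
  assumes X: "X = Am + A0 ** X + A1 ** (X ** X)" and v: "X *v v = z *\<^sub>R v" and "z \<noteq> 0"
  shows "Astar Am A0 A1 z *v v = v"
proof -
  have "z *\<^sub>R v = Am *v v + A0 *v (X *v v) + A1 *v (X *v (X *v v))"
    using v by (subst (asm) X) (simp add: matrix_vector_mult_add_rdistrib matrix_vector_mul_assoc)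
  also have "\<dots> = Am *v v + z *\<^sub>R (A0 *v v) + (z * z) *\<^sub>R (A1 *v v)"
    using v by (simp add: matrix_vector_mult_scaleR)
  also have "\<dots> = z *\<^sub>R (Astar Am A0 A1 z *v v)"
    unfolding Astar_def using \<open>z \<noteq> 0\<close>
    by (simp add: matrix_vector_mult_add_rdistrib scaleR_matrix_vector_assoc[symmetric]
        scaleR_add_right)
  finally show ?thesis using \<open>z \<noteq> 0\<close> by simp
qed

theorem lemma3p5:
  fixes Am A0 A1 G Gr :: "real^'n^'n" and v vr :: "real^'n" and thl thu :: real
  assumes nonneg: "nonneg_mat Am" "nonneg_mat A0" "nonneg_mat A1"
    and irr: "irreducible_inf (Qmat Am A0 A1)"
    and inf_le: "(INF \<theta>. spr (Astar Am A0 A1 (exp \<theta>))) \<le> 1"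
    and th_le: "thl \<le> thu"
    and thl_sol: "spr (Astar Am A0 A1 (exp thl)) = 1"
    and thu_sol: "spr (Astar Am A0 A1 (exp thu)) = 1"
    and th_only: "\<And>\<theta>. spr (Astar Am A0 A1 (exp \<theta>)) = 1 \<Longrightarrow> \<theta> = thl \<or> \<theta> = thu"
    and G: "minimal_nonneg_solution (\<lambda>X. Am + A0 ** X + A1 ** (X ** X)) G"
    and Gr: "minimal_nonneg_solution (\<lambda>X. A1 + A0 ** X + Am ** (X ** X)) Gr"
    and v: "nonneg_vec v" "v \<noteq> 0" "G *v v = exp thl *\<^sub>R v"
    and vr: "nonneg_vec vr" "vr \<noteq> 0" "Gr *v vr = exp (- thu) *\<^sub>R vr"
    and eq: "thl = thu"
  shows "\<exists>c::real. c > 0 \<and> v = c *\<^sub>R vr"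
proof -
  define M where "M = Astar Am A0 A1 (exp thl)"
  have "M *v v = 1 *\<^sub>R v"
    using quadratic_root_eigenvector_Astar[of G Am A0 A1 v "exp thl"] G v(3)
    unfolding M_def minimal_nonneg_solution_def by simp
  moreover have "M *v vr = 1 *\<^sub>R vr"
    using quadratic_root_eigenvector_Astar[of Gr A1 A0 Am vr "exp (- thl)"] Gr vr(3) eq
    unfolding M_def minimal_nonneg_solution_def by (simp add: exp_minus Astar_swap)
  moreover have "nonneg_mat M" "irreducible_inf (\<lambda>i j. M $ i $ j)"
    unfolding M_def using Astar_nonneg[OF nonneg] Astar_irreducible[OF nonneg _ irr] by auto
  ultimately show ?thesis
    using irreducible_nonneg_eigenvector_unique[of M v 1 vr] v(1,2) vr(1,2) by blast
qed

end
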